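(* Fix $\theta_j\in[0,1]$ and a non-increasing function $x_{-j}^{-1}$ arising from the other contests' prize structures. Let $x_j,\tilde x_j$ be strictly decreasing interim allocation functions, and set $$\phi_0:=\Phi_j^*(\theta_j;x_j,x_{-j}^{-1}),\qquad \phi_1:=\Phi_j^*(\theta_j;\tilde x_j,x_{-j}^{-1}).$$ Assume $\phi_0>0$. Then: - if $x_j(\phi_0)\ge\tilde x_j(\phi_0)$, then $\phi_0\ge\phi_1$; - if $x_j(\phi_0)\le\tilde x_j(\phi_0)$, then $\phi_0\le\phi_1$.
   Context: Interim allocation function. For a prize structure $\vec w$ with $w_1\ge\dots\ge w_n\ge0$ ($n\ge2$), $x_{\vec w}(\phi)=\sum_kw_k\binom{n-1}{k-1}\phi^{k-1}(1-\phi)^{n-k}$ on $[0,1]$. It is strictly decreasing iff $w_1>w_n$, and constant otherwise. Inverse notation. - For an interim allocation function $x$: $x^{-1}(y):=\max\{\phi\in[0,1]:x(\phi)\ge y\}$, with $x^{-1}(y):=0$ if $x(0)<y$. - Given prize structures of contests $j'\ne j$: $x_{-j}^{-1}:=\sum_{j'\ne j}x_{j'}^{-1}$. - For contest $j$ with strictly decreasing $x_j$: $Q(y):=x_j^{-1}(y)+x_{-j}^{-1}(y)$, $Q^{-1}(q):=\sup\{y:Q(y)\ge q\}$. Equilibrium participation. $\Phi_j^*(q;x_j,x_{-j}^{-1}):=x_j^{-1}(Q^{-1}(q))$. This is the equilibrium probability that a contestant has quantile at most $q$ and enters contest $j$, in the model where contestants with quantiles $q\sim U[0,1]$ choose among contests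 and compete by effort. *)

theory Defs
  imports Complex_Main
begin

definition prize_structure :: "nat \<Rightarrow> (nat \<Rightarrow> real) \<Rightarrow> bool" where
  "prize_structure n w \<longleftrightarrow> 2 \<le> n \<and> (\<forall>k\<in>{1..<n}. w (Suc k) \<le> w k) \<and> 0 \<le> w n"

definition interim :: "nat \<Rightarrow> (nat \<Rightarrow> real) \<Rightarrow> real \<Rightarrow> real" where
  "interim n w \<phi> = (\<Sum>k=1..n. w k * real ((n - 1) choose (k - 1)) * \<phi> ^ (k - 1) * (1 - \<phi>) ^ (n - k))"

definition alloc_inv :: "(real \<Rightarrow> real) \<Rightarrow> real \<Rightarrow> real" where
  "alloc_inv x y = (if x 0 < y then 0 else (GREATEST \<phi>. \<phi> \<in> {0..1} \<and> y \<le> x \<phi>))"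

definition others_inv :: "nat \<Rightarrow> 'c set \<Rightarrow> ('c \<Rightarrow> nat \<Rightarrow> real) \<Rightarrow> real \<Rightarrow> real" where
  "others_inv n J ws y = (\<Sum>c\<in>J. alloc_inv (interim n (ws c)) y)"

definition Qfun :: "(real \<Rightarrow> real) \<Rightarrow> (real \<Rightarrow> real) \<Rightarrow> real \<Rightarrow> real" where
  "Qfun x xmj y = alloc_inv x y + xmj y"

definition Qinv :: "(real \<Rightarrow> real) \<Rightarrow> (real \<Rightarrow> real) \<Rightarrow> real \<Rightarrow> real" where
  "Qinv x xmj q = Sup {y. q \<le> Qfun x xmj y}"

definition Phi_star :: "real \<Rightarrow> (real \<Rightarrow> real) \<Rightarrow> (real \<Rightarrow> real) \<Rightarrow> real" where
  "Phi_star q x xmj = alloc_inv x (Qinv x xmj q)"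

end

theory Submission
  imports Defs "HOL-Analysis.Analysis"
begin

text \<open>
  Write Q = x_j^{-1} + x_{-j}^{-1} and Q~ = \<tilde>x_j^{-1} + x_{-j}^{-1}. For \<theta> > 0 the value
  c_0 = Q^{-1}(\<theta>) is a cutoff: Q \<ge> \<theta> strictly below c_0 and Q < \<theta> strictly above it;
  likewise c_1 for Q~, and \<phi>_0 = x_j^{-1}(c_0), \<phi>_1 = \<tilde>x_j^{-1}(c_1). If \<phi>_0 and \<phi>_1 were
  in the wrong order, the comparison of x_j and \<tilde>x_j at \<phi>_0 (together with x_j(\<phi>_0) = c_0,
  by continuity, when 0 < \<phi>_0 < 1) yields levels u \<le> v on opposite sides of the two cutoffs
  such that the allocation inverse at u, on the side where the total is below \<theta>, exceeds the
  one at v, on the side where it is at least \<theta>. Since x_{-j}^{-1}(u) \<ge> x_{-j}^{-1}(v), this is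
  impossible.
\<close>

lemma le_of_alloc_inv_pos: "0 < alloc_inv x y \<Longrightarrow> y \<le> x 0"
  by (cases "x 0 < y") (auto simp: alloc_inv_def)

context
  fixes x :: "real \<Rightarrow> real"
  assumes continuous: "continuous_on {0..1} x"
begin

lemma alloc_inv_greatest:
  assumes "y \<le> x 0"
  shows "alloc_inv x y \<in> {0..1}" and "y \<le> x (alloc_inv x y)"
    and "\<And>\<phi>. \<phi> \<in> {0..1} \<Longrightarrow> y \<le> x \<phi> \<Longrightarrow> \<phi> \<le> alloc_inv x y"
proof -
  let ?S = "{\<phi> \<in> {0..1}. y \<le> x \<phi>}"
  have "closed ?S"
    by (intro continuous_on_closed_Collect_le continuous continuous_on_const) auto
  moreover have "bounded ?S"
    by (rule bounded_subset[of "{0..1}"]) auto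
  ultimately have "compact ?S"
    by (simp add: compact_eq_bounded_closed)
  moreover have "0 \<in> ?S" using assms by auto
  ultimately obtain m where m: "m \<in> ?S" "\<forall>\<phi>\<in>?S. \<phi> \<le> m"
    using compact_attains_sup by blast
  have "alloc_inv x y = m"
    unfolding alloc_inv_def using assms m by (auto intro!: Greatest_equality)
  with m show "alloc_inv x y \<in> {0..1}" "y \<le> x (alloc_inv x y)"
    "\<And>\<phi>. \<phi> \<in> {0..1} \<Longrightarrow> y \<le> x \<phi> \<Longrightarrow> \<phi> \<le> alloc_inv x y"
    by auto
qed

lemma alloc_inv_in_unit: "alloc_inv x y \<in> {0..1}"
  using alloc_inv_greatest(1) by (cases "y \<le> x 0") (auto simp: alloc_inv_def)

lemma alloc_inv_antimono: "antimono (alloc_inv x)"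
proof
  fix a b :: real assume "a \<le> b"
  show "alloc_inv x b \<le> alloc_inv x a"
  proof (cases "b \<le> x 0")
    case True
    with \<open>a \<le> b\<close> show ?thesis
      using alloc_inv_greatest[OF True] by (intro alloc_inv_greatest(3)) auto
  qed (use alloc_inv_in_unit[of a] in \<open>simp add: alloc_inv_def\<close>)
qed

context
  assumes decreasing: "strict_antimono_on {0..1} x"
begin

lemma decreasingD: "\<phi> \<in> {0..1} \<Longrightarrow> \<psi> \<in> {0..1} \<Longrightarrow> \<phi> < \<psi> \<Longrightarrow> x \<psi> < x \<phi>"
  using decreasing by (simp add: monotone_on_def)

lemma le_alloc_inv: "\<phi> \<in> {0..1} \<Longrightarrow> y \<le> x \<phi> \<Longrightarrow> \<phi> \<le> alloc_inv x y"
  using alloc_inv_greatest(3) decreasingD[of 0 \<phi>] by (cases "\<phi> = 0") force+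

lemma alloc_inv_le: "\<phi> \<in> {0..1} \<Longrightarrow> x \<phi> \<le> y \<Longrightarrow> alloc_inv x y \<le> \<phi>"
  using alloc_inv_greatest(1,2) decreasingD[of \<phi> "alloc_inv x y"]
  by (cases "y \<le> x 0") (force simp: alloc_inv_def)+

lemma alloc_inv_less_imp_less: "\<phi> \<in> {0..1} \<Longrightarrow> alloc_inv x y < \<phi> \<Longrightarrow> x \<phi> < y"
  by (meson le_alloc_inv not_le)

lemma level_at_alloc_inv:
  assumes "0 < alloc_inv x y" "alloc_inv x y < 1"
  shows "x (alloc_inv x y) = y"
proof -
  let ?p = "alloc_inv x y"
  have y: "y \<le> x 0" using le_of_alloc_inv_pos assms(1) .
  have "x 1 \<le> y" using alloc_inv_less_imp_less[of 1] assms(2) by fastforce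
  moreover have "y \<le> x ?p" using alloc_inv_greatest(2)[OF y] .
  moreover have "continuous_on {?p..1} x"
    using continuous_on_subset[OF continuous] alloc_inv_in_unit[of y] by auto
  ultimately obtain \<phi> where "?p \<le> \<phi>" "\<phi> \<le> 1" "x \<phi> = y"
    using IVT2'[of x 1 y ?p] assms(2) by auto
  moreover have "\<phi> \<le> ?p"
    using le_alloc_inv \<open>?p \<le> \<phi>\<close> \<open>\<phi> \<le> 1\<close> \<open>x \<phi> = y\<close> assms(1) by auto
  ultimately show ?thesis by auto
qed

end

end

definition is_cutoff :: "(real \<Rightarrow> real) \<Rightarrow> real \<Rightarrow> real \<Rightarrow> bool" where
  "is_cutoff Q \<theta> c \<longleftrightarrow> (\<forall>y<c. \<theta> \<le> Q y) \<and> (\<forall>y>c. Q y < \<theta>)"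

lemma Qinv_is_cutoff:
  fixes h M :: "real \<Rightarrow> real"
  assumes "continuous_on {0..1} h" "strict_antimono_on {0..1} h"
    and "antimono M" "\<And>y. 0 \<le> M y" "\<And>y. B < y \<Longrightarrow> M y = 0"
    and "0 < \<theta>" "\<theta> \<le> 1"
  shows "is_cutoff (Qfun h M) \<theta> (Qinv h M \<theta>)"
proof -
  let ?S = "{y. \<theta> \<le> Qfun h M y}"
  have "1 \<le> alloc_inv h (h 1)"
    using le_alloc_inv[OF assms(1,2)] by simp
  then have "h 1 \<in> ?S" using assms(4)[of "h 1"] assms(7) by (simp add: Qfun_def)
  then have nonempty: "?S \<noteq> {}" by blast
  have bounded: "bdd_above ?S"
  proof (rule bdd_aboveI)
    fix y assume "y \<in> ?S"
    show "y \<le> max B (h 0)"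
    proof (rule ccontr)
      assume "\<not> y \<le> max B (h 0)"
      then have "M y = 0" "alloc_inv h y = 0" using assms(5) by (auto simp: alloc_inv_def)
      then show False using \<open>y \<in> ?S\<close> assms(6) by (simp add: Qfun_def)
    qed
  qed
  have downward_closed: "y \<in> ?S" if "y \<le> z" "z \<in> ?S" for y z
    using that antimonoD[OF alloc_inv_antimono[OF assms(1)] that(1)] antimonoD[OF assms(3) that(1)]
    by (simp add: Qfun_def)
  show ?thesis
    unfolding is_cutoff_def
  proof (intro conjI allI impI)
    fix y assume "y < Qinv h M \<theta>"
    then obtain z where "z \<in> ?S" "y < z" using less_cSupE[OF _ nonempty] unfolding Qinv_def by blast
    then show "\<theta> \<le> Qfun h M y" using downward_closed[of y z] by simp
  next
    fix y assume "Qinv h M \<theta> < y"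
    then have "y \<notin> ?S" using cSup_upper[OF _ bounded] unfolding Qinv_def by force
    then show "Qfun h M y < \<theta>" by simp
  qed
qed

lemma Qinv_zero:
  assumes "continuous_on {0..1} h" "\<And>y. 0 \<le> M y"
  shows "Qinv h M 0 = Sup UNIV"
  using alloc_inv_in_unit[OF assms(1)] assms(2) by (simp add: Qinv_def Qfun_def add_nonneg_nonneg)

context
  fixes f g :: "real \<Rightarrow> real"
  assumes f_cont: "continuous_on {0..1} f" and f_decr: "strict_antimono_on {0..1} f"
    and g_cont: "continuous_on {0..1} g" and g_decr: "strict_antimono_on {0..1} g"
begin

lemma alloc_inv_le_of_below:
  assumes pos: "0 < alloc_inv f c" and below: "g (alloc_inv f c) \<le> f (alloc_inv f c)"
  shows "alloc_inv g c \<le> alloc_inv f c"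
proof (cases "alloc_inv f c < 1")
  case True
  with pos below have "g (alloc_inv f c) \<le> c"
    using level_at_alloc_inv[OF f_cont f_decr] by simp
  then show ?thesis
    using alloc_inv_le[OF g_cont g_decr] alloc_inv_in_unit[OF f_cont] by blast
next
  case False
  then show ?thesis using alloc_inv_in_unit[OF g_cont, of c] by simp
qed

lemma alloc_inv_ge_of_above:
  assumes above: "f (alloc_inv f c) \<le> g (alloc_inv f c)"
  shows "alloc_inv f c \<le> alloc_inv g c"
proof (cases "c \<le> f 0")
  case True
  with above show ?thesis
    using alloc_inv_greatest(1,2)[OF f_cont True] by (intro le_alloc_inv[OF g_cont g_decr]) auto
next
  case False
  then show ?thesis using alloc_inv_in_unit[OF g_cont, of c] by (simp add: alloc_inv_def)
qed

lemma alloc_inv_le_of_cutoffs: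
  assumes M: "antimono M"
    and cutoff_f: "is_cutoff (Qfun f M) \<theta> c\<^sub>0" and cutoff_g: "is_cutoff (Qfun g M) \<theta> c\<^sub>1"
    and pos: "0 < alloc_inv f c\<^sub>0" and below: "g (alloc_inv f c\<^sub>0) \<le> f (alloc_inv f c\<^sub>0)"
  shows "alloc_inv g c\<^sub>1 \<le> alloc_inv f c\<^sub>0"
proof (rule ccontr)
  define p\<^sub>0 p\<^sub>1 where "p\<^sub>0 = alloc_inv f c\<^sub>0" and "p\<^sub>1 = alloc_inv g c\<^sub>1"
  assume "\<not> ?thesis"
  then have "p\<^sub>0 < p\<^sub>1" by (simp add: p\<^sub>0_def p\<^sub>1_def)
  have p\<^sub>0: "p\<^sub>0 \<in> {0..1}" and p\<^sub>1: "p\<^sub>1 \<in> {0..1}"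
    unfolding p\<^sub>0_def p\<^sub>1_def using alloc_inv_in_unit f_cont g_cont by auto
  have "f p\<^sub>0 = c\<^sub>0"
    using level_at_alloc_inv[OF f_cont f_decr] pos \<open>p\<^sub>0 < p\<^sub>1\<close> p\<^sub>1 by (simp add: p\<^sub>0_def)
  have "c\<^sub>1 \<le> g p\<^sub>1"
    using alloc_inv_greatest(2)[OF g_cont le_of_alloc_inv_pos[of g c\<^sub>1]] pos \<open>p\<^sub>0 < p\<^sub>1\<close>
    by (simp add: p\<^sub>0_def p\<^sub>1_def)
  define q\<^sub>1 where "q\<^sub>1 = (p\<^sub>0 + p\<^sub>1) / 2"
  define q\<^sub>2 where "q\<^sub>2 = (p\<^sub>0 + q\<^sub>1) / 2"
  have q: "p\<^sub>0 < q\<^sub>2" "q\<^sub>2 < q\<^sub>1" "q\<^sub>1 < p\<^sub>1" "q\<^sub>1 \<in> {0..1}" "q\<^sub>2 \<in> {0..1}"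
    using \<open>p\<^sub>0 < p\<^sub>1\<close> p\<^sub>0 p\<^sub>1 by (auto simp: q\<^sub>1_def q\<^sub>2_def field_simps)
  define u where "u = g q\<^sub>1"
  define v where "v = max u (f q\<^sub>2)"
  have "c\<^sub>1 < u"
    using decreasingD[OF g_cont g_decr] q p\<^sub>1 \<open>c\<^sub>1 \<le> g p\<^sub>1\<close> by (fastforce simp: u_def)
  have "v < c\<^sub>0"
    using decreasingD[OF g_cont g_decr, of p\<^sub>0 q\<^sub>1] decreasingD[OF f_cont f_decr, of p\<^sub>0 q\<^sub>2]
      q p\<^sub>0 below \<open>f p\<^sub>0 = c\<^sub>0\<close> by (auto simp: u_def v_def p\<^sub>0_def)
  have "q\<^sub>1 \<le> alloc_inv g u"
    using le_alloc_inv[OF g_cont g_decr] q by (simp add: u_def)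
  moreover have "alloc_inv f v \<le> q\<^sub>2"
    using alloc_inv_le[OF f_cont f_decr] q by (simp add: v_def)
  moreover have "M v \<le> M u" using antimonoD[OF M] by (simp add: v_def)
  moreover have "Qfun g M u < \<theta>" "\<theta> \<le> Qfun f M v"
    using cutoff_f cutoff_g \<open>c\<^sub>1 < u\<close> \<open>v < c\<^sub>0\<close> by (auto simp: is_cutoff_def)
  ultimately show False using q by (simp add: Qfun_def)
qed

lemma alloc_inv_ge_of_cutoffs:
  assumes M: "antimono M"
    and cutoff_f: "is_cutoff (Qfun f M) \<theta> c\<^sub>0" and cutoff_g: "is_cutoff (Qfun g M) \<theta> c\<^sub>1"
    and above: "f (alloc_inv f c\<^sub>0) \<le> g (alloc_inv f c\<^sub>0)"
  shows "alloc_inv f c\<^sub>0 \<le> alloc_inv g c\<^sub>1"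
proof (cases "c\<^sub>1 \<le> c\<^sub>0")
  case True
  then show ?thesis
    using alloc_inv_ge_of_above[OF above] antimonoD[OF alloc_inv_antimono[OF g_cont]] by force
next
  case False
  show ?thesis
  proof (rule ccontr)
    define p\<^sub>0 p\<^sub>1 where "p\<^sub>0 = alloc_inv f c\<^sub>0" and "p\<^sub>1 = alloc_inv g c\<^sub>1"
    assume "\<not> ?thesis"
    then have "p\<^sub>1 < p\<^sub>0" by (simp add: p\<^sub>0_def p\<^sub>1_def)
    have p\<^sub>0: "p\<^sub>0 \<in> {0..1}" and p\<^sub>1: "p\<^sub>1 \<in> {0..1}"
      unfolding p\<^sub>0_def p\<^sub>1_def using alloc_inv_in_unit f_cont g_cont by auto
    have "c\<^sub>0 \<le> f p\<^sub>0"
      using alloc_inv_greatest(2)[OF f_cont le_of_alloc_inv_pos[of f c\<^sub>0]] \<open>p\<^sub>1 < p\<^sub>0\<close> p\<^sub>1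
      by (simp add: p\<^sub>0_def)
    define q\<^sub>1 where "q\<^sub>1 = (p\<^sub>0 + p\<^sub>1) / 2"
    define q\<^sub>2 where "q\<^sub>2 = (p\<^sub>0 + q\<^sub>1) / 2"
    have q: "p\<^sub>1 < q\<^sub>1" "q\<^sub>1 < q\<^sub>2" "q\<^sub>2 < p\<^sub>0" "q\<^sub>1 \<in> {0..1}" "q\<^sub>2 \<in> {0..1}"
      using \<open>p\<^sub>1 < p\<^sub>0\<close> p\<^sub>0 p\<^sub>1 by (auto simp: q\<^sub>1_def q\<^sub>2_def field_simps)
    have "g q\<^sub>1 < c\<^sub>1"
      using alloc_inv_less_imp_less[OF g_cont g_decr] q by (simp add: p\<^sub>1_def)
    define v where "v = (max (g q\<^sub>1) c\<^sub>0 + c\<^sub>1) / 2"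
    define u where "u = min v (f q\<^sub>2)"
    have v: "g q\<^sub>1 \<le> v" "v < c\<^sub>1"
      using \<open>g q\<^sub>1 < c\<^sub>1\<close> False by (auto simp: v_def)
    have "c\<^sub>0 < u"
      using decreasingD[OF f_cont f_decr, of q\<^sub>2 p\<^sub>0] q p\<^sub>0 \<open>c\<^sub>0 \<le> f p\<^sub>0\<close> False \<open>g q\<^sub>1 < c\<^sub>1\<close>
      by (auto simp: u_def v_def)
    have "alloc_inv g v \<le> q\<^sub>1"
      using alloc_inv_le[OF g_cont g_decr] q v by simp
    moreover have "q\<^sub>2 \<le> alloc_inv f u"
      using le_alloc_inv[OF f_cont f_decr] q by (simp add: u_def)
    moreover have "M v \<le> M u" using antimonoD[OF M] by (simp add: u_def)
    moreover have "Qfun f M u < \<theta>" "\<theta> \<le> Qfun g M v"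
      using cutoff_f cutoff_g \<open>c\<^sub>0 < u\<close> v by (auto simp: is_cutoff_def)
    ultimately show False using q by (simp add: Qfun_def)
  qed
qed

lemma Phi_star_comparison:
  assumes M: "antimono M" "\<And>y. 0 \<le> M y" "\<And>y. B < y \<Longrightarrow> M y = 0"
    and \<theta>: "\<theta> \<in> {0..1}" and pos: "0 < Phi_star \<theta> f M"
  shows "g (Phi_star \<theta> f M) \<le> f (Phi_star \<theta> f M) \<longrightarrow> Phi_star \<theta> g M \<le> Phi_star \<theta> f M"
    and "f (Phi_star \<theta> f M) \<le> g (Phi_star \<theta> f M) \<longrightarrow> Phi_star \<theta> f M \<le> Phi_star \<theta> g M"
proof -
  let ?c\<^sub>0 = "Qinv f M \<theta>" and ?c\<^sub>1 = "Qinv g M \<theta>"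
  \<comment> \<open>For \<theta> = 0 both Qinv values are the junk value Sup UNIV, hence equal.\<close>
  have cutoffs: "?c\<^sub>0 = ?c\<^sub>1 \<or> is_cutoff (Qfun f M) \<theta> ?c\<^sub>0 \<and> is_cutoff (Qfun g M) \<theta> ?c\<^sub>1"
  proof (cases "\<theta> = 0")
    case True
    then show ?thesis using Qinv_zero[OF f_cont M(2)] Qinv_zero[OF g_cont M(2)] by simp
  next
    case False
    with \<theta> show ?thesis
      using Qinv_is_cutoff[OF f_cont f_decr M] Qinv_is_cutoff[OF g_cont g_decr M] by auto
  qed
  show "g (Phi_star \<theta> f M) \<le> f (Phi_star \<theta> f M) \<longrightarrow> Phi_star \<theta> g M \<le> Phi_star \<theta> f M"
    using cutoffs pos alloc_inv_le_of_below alloc_inv_le_of_cutoffs[OF M(1)]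
    unfolding Phi_star_def by metis
  show "f (Phi_star \<theta> f M) \<le> g (Phi_star \<theta> f M) \<longrightarrow> Phi_star \<theta> f M \<le> Phi_star \<theta> g M"
    using cutoffs alloc_inv_ge_of_above alloc_inv_ge_of_cutoffs[OF M(1)]
    unfolding Phi_star_def by metis
qed

end

lemma continuous_on_interim: "continuous_on S (interim n w)"
  unfolding interim_def by (intro continuous_intros)

lemma others_inv_antimono: "antimono (others_inv n J ws)"
  unfolding others_inv_def
  by (intro antimonoI sum_mono antimonoD[OF alloc_inv_antimono[OF continuous_on_interim]])

lemma others_inv_nonneg: "0 \<le> others_inv n J ws y"
  unfolding others_inv_def using alloc_inv_in_unit[OF continuous_on_interim] by (intro sum_nonneg) auto

lemma others_inv_eq_0:
  assumes "finite J" and "(\<Sum>c\<in>J. \<bar>interim n (ws c) 0\<bar>) < y"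
  shows "others_inv n J ws y = 0"
proof -
  have "\<bar>interim n (ws c) 0\<bar> < y" if "c \<in> J" for c
    using member_le_sum[of c J "\<lambda>c. \<bar>interim n (ws c) 0\<bar>"] that assms by auto
  then show ?thesis unfolding others_inv_def alloc_inv_def by (force intro!: sum.neutral)
qed

theorem mainTheorem11:
  fixes n :: nat and w wt :: "nat \<Rightarrow> real" and J :: "'c set"
    and ws :: "'c \<Rightarrow> nat \<Rightarrow> real" and \<theta> :: real
  assumes "prize_structure n w" and "prize_structure n wt"
    and "finite J" and "\<forall>c\<in>J. prize_structure n (ws c)"
    and "\<theta> \<in> {0..1}"
    and "strict_antimono_on {0..1} (interim n w)"
    and "strict_antimono_on {0..1} (interim n wt)"
    and "Phi_star \<theta> (interim n w) (others_inv n J ws) > 0"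
  shows "(interim n wt (Phi_star \<theta> (interim n w) (others_inv n J ws))
            \<le> interim n w (Phi_star \<theta> (interim n w) (others_inv n J ws))
          \<longrightarrow> Phi_star \<theta> (interim n wt) (others_inv n J ws)
            \<le> Phi_star \<theta> (interim n w) (others_inv n J ws))
       \<and> (interim n w (Phi_star \<theta> (interim n w) (others_inv n J ws))
            \<le> interim n wt (Phi_star \<theta> (interim n w) (others_inv n J ws))
          \<longrightarrow> Phi_star \<theta> (interim n w) (others_inv n J ws)
            \<le> Phi_star \<theta> (interim n wt) (others_inv n J ws))"
  using Phi_star_comparison[OF continuous_on_interim assms(6) continuous_on_interim assms(7)
      others_inv_antimono others_inv_nonneg others_inv_eq_0[OF assms(3)] assms(5,8)]
  by blast

end
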